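(* Let $d\ge 2$, let $\hat{P}\in\mathbb{R}^{d\times d}$ be an orthogonal projection matrix of rank $p$ with $1\le p\le d-1$, let $\hat{P}^{\perp}=I-\hat{P}$ and $q=d-p$. Let $\lambda_1,\lambda_2>0$, let $k\ge 1$, let $x_{a_0},\dots,x_{a_{k-1}}\in\mathbb{R}^d$ be vectors with $\|x_{a_i}\|\le 1$, let $D_k\in\mathbb{R}^{k\times d}$ be the matrix whose rows are $x_{a_0}^\top,\dots,x_{a_{k-1}}^\top$, and let $B_k=D_k^\top D_k+\lambda_1\hat{P}^{\perp}+\lambda_2\hat{P}$. Then $$\log\left(\frac{\det(B_k)}{\det(\lambda_1\hat{P}^{\perp}+\lambda_2\hat{P})}\right)\le S_k^{\lambda_1,\lambda_2}:=p\log\left(1+\frac{k}{p\lambda_2}\right)+q\log\left(1+\frac{k}{q\lambda_1}\right).$$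
   Context: $\|\cdot\|$ denotes the Euclidean norm. An orthogonal projection matrix is a symmetric idempotent matrix. *)

theory Defs
  imports "HOL-Analysis.Analysis"
begin

end

theory Submission
  imports Defs
begin

(*
  Conjugating with an orthonormal eigenbasis U of the projection P turns
  lambda1 (I - P) + lambda2 P into a diagonal matrix W with p entries lambda2 and
  q = d - p entries lambda1, and B_k into Y^T Y + W with Y = D_k U.  Hadamard's
  inequality bounds det (Y^T Y + W) by the product of the diagonal entries
  W_jj + |Y e_j|^2, and the squared column norms of Y add up to the squared
  Frobenius norm of D_k, which is at most k.  Concavity of ln on each of the two
  blocks of eigenvalues then gives S_k.

  Hadamard's inequality is proved by symmetric Gaussian elimination: congruence
  with a shear of determinant 1 clears the row and column of a pivot without
  increasing any diagonal entry.  As the dimension is a type, the induction runs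
  over the set of rows that still have nonzero off-diagonal entries.
*)

section \<open>Hadamard's inequality\<close>

definition pos_def :: "real^'n^'n \<Rightarrow> bool" where
  "pos_def X \<longleftrightarrow> (\<forall>x. x \<noteq> 0 \<longrightarrow> 0 < x \<bullet> (X *v x))"

lemma pos_def_diag_pos: "pos_def X \<Longrightarrow> 0 < X $ i $ i"
  unfolding pos_def_def
  by (metis axis_eq_0_iff cart_eq_inner_axis inner_commute matrix_vector_mult_basis column_def
      vec_lambda_beta zero_neq_one)

lemma inner_congruence:
  fixes X :: "real^'m^'m" and F :: "real^'n^'m"
  shows "x \<bullet> ((transpose F ** X ** F) *v x) = (F *v x) \<bullet> (X *v (F *v x))"
  by (metis dot_lmul_matrix matrix_vector_mul_assoc vector_transpose_matrix)

lemma pos_def_congruence: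
  fixes X F :: "real^'n^'n"
  assumes "pos_def X" and "det F \<noteq> 0"
  shows "pos_def (transpose F ** X ** F)"
  unfolding pos_def_def inner_congruence
proof (intro allI impI)
  fix x :: "real^'n"
  assume "x \<noteq> 0"
  then have "F *v x \<noteq> 0"
    using assms(2) by (metis invertible_det_nz invertible_def matrix_left_invertible_ker)
  then show "0 < (F *v x) \<bullet> (X *v (F *v x))"
    using assms(1) unfolding pos_def_def by blast
qed

definition shear :: "'n \<Rightarrow> real^'n \<Rightarrow> real^'n^'n" where
  "shear a c = (\<chi> i j. (if i = j then 1 else 0) - (if i = a then c $ j else 0))"

lemma det_shear:
  fixes c :: "real^'n"
  assumes "c $ a = 0"
  shows "det (shear a c) = 1"
proof -
  have shear_rows:
    "shear a c = (\<chi> k. if k = a then row a (mat 1 :: real^'n^'n) + (-c) else row k (mat 1))"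
    by (simp add: shear_def vec_eq_iff row_def mat_def)
  have "-c = (\<Sum>j\<in>UNIV - {a}. (- c $ j) *s row j (mat 1 :: real^'n^'n))"
    using assms by (simp add: vec_eq_iff row_def mat_def if_distrib cong: if_cong)
  also have "\<dots> \<in> vec.span {row j (mat 1 :: real^'n^'n) |j. j \<noteq> a}"
    by (intro vec.span_sum vec.span_scale vec.span_base) auto
  finally show ?thesis
    unfolding shear_rows using det_row_span by fastforce
qed

lemma transpose_shear_mult_entry:
  "(transpose (shear a c) ** X) $ i $ j = X $ i $ j - c $ i * X $ a $ j"
  by (simp add: shear_def matrix_matrix_mult_def transpose_def left_diff_distrib sum_subtractf
      if_distrib[of "\<lambda>x. x * z" for z] cong: if_cong)

lemma mult_shear_entry:
  "(Y ** shear a c) $ i $ j = Y $ i $ j - c $ j * Y $ i $ a"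
  by (simp add: shear_def matrix_matrix_mult_def right_diff_distrib sum_subtractf
      if_distrib[of "\<lambda>x. z * x" for z] cong: if_cong)

definition offdiag_rows :: "real^'n^'n \<Rightarrow> 'n set" where
  "offdiag_rows X = {i. \<exists>j. j \<noteq> i \<and> X $ i $ j \<noteq> 0}"

lemma symmetric_pivot_elimination:
  fixes X :: "real^'n^'n"
  assumes sym: "transpose X = X" and pd: "pos_def X"
  obtains Z where "transpose Z = Z" "pos_def Z" "det Z = det X"
    "\<And>i. Z $ i $ i \<le> X $ i $ i" "offdiag_rows Z \<subseteq> offdiag_rows X - {a}"
proof -
  have X_sym: "X $ j $ i = X $ i $ j" for i j
    using sym by (metis transpose_def vec_lambda_beta)
  have pivot: "0 < X $ a $ a"
    using pd by (rule pos_def_diag_pos)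
  define c where "c = (\<chi> i. if i = a then 0 else X $ i $ a / X $ a $ a)"
  define Z where "Z = transpose (shear a c) ** X ** shear a c"
  have Z_expand:
    "Z $ i $ j = X $ i $ j - c $ i * X $ a $ j - c $ j * X $ i $ a + c $ i * c $ j * X $ a $ a"
    for i j by (simp add: Z_def mult_shear_entry transpose_shear_mult_entry algebra_simps)
  have Z_entry: "Z $ i $ j = (if i = a \<or> j = a then (if i = j then X $ a $ a else 0)
                                   else X $ i $ j - X $ i $ a * X $ j $ a / X $ a $ a)" for i j
    unfolding Z_expand using pivot X_sym[of a i] X_sym[of a j] by (auto simp: c_def field_simps)
  have Z_sym: "Z $ j $ i = Z $ i $ j" for i j
    unfolding Z_entry using X_sym[of i j] by (simp add: mult.commute)
  have det_shear_c: "det (shear a c) = 1"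
    by (rule det_shear) (simp add: c_def)
  show thesis
  proof
    show "transpose Z = Z"
      by (simp add: vec_eq_iff transpose_def Z_sym)
    show "pos_def Z"
      unfolding Z_def using pd det_shear_c by (simp add: pos_def_congruence)
    show "det Z = det X"
      by (simp add: Z_def det_mul det_shear_c)
    show "Z $ i $ i \<le> X $ i $ i" for i
      using pivot by (simp add: Z_entry divide_nonneg_pos)
    show "offdiag_rows Z \<subseteq> offdiag_rows X - {a}"
    proof
      fix i
      assume "i \<in> offdiag_rows Z"
      then obtain j where "j \<noteq> i" "Z $ i $ j \<noteq> 0"
        by (auto simp: offdiag_rows_def)
      then have "i \<noteq> a" "X $ i $ j \<noteq> 0 \<or> X $ i $ a \<noteq> 0"
        by (auto simp: Z_entry split: if_splits)
      then show "i \<in> offdiag_rows X - {a}"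
        using \<open>j \<noteq> i\<close> by (auto simp: offdiag_rows_def)
    qed
  qed
qed

lemma hadamard_inequality_offdiag_rows:
  fixes X :: "real^'n^'n"
  assumes "transpose X = X" and "pos_def X" and "offdiag_rows X \<subseteq> S"
  shows "0 < det X \<and> det X \<le> (\<Prod>i\<in>UNIV. X $ i $ i)"
  using finite[of S] assms
proof (induction S arbitrary: X rule: finite_induct)
  case empty
  have "X $ i $ j = 0" if "i \<noteq> j" for i j
  proof -
    have "i \<notin> offdiag_rows X"
      using empty.prems(3) by blast
    then show ?thesis
      using that unfolding offdiag_rows_def by auto
  qed
  then have "det X = (\<Prod>i\<in>UNIV. X $ i $ i)"
    by (rule det_diagonal)
  then show ?case
    using pos_def_diag_pos[OF empty.prems(2)] by (simp add: prod_pos)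
next
  case (insert a S)
  obtain Z where Z: "transpose Z = Z" "pos_def Z" "det Z = det X"
    "\<And>i. Z $ i $ i \<le> X $ i $ i" "offdiag_rows Z \<subseteq> offdiag_rows X - {a}"
    using symmetric_pivot_elimination[OF insert.prems(1,2), where a = a] by blast
  have "offdiag_rows Z \<subseteq> S"
    using Z(5) insert.prems(3) by blast
  then have IH: "0 < det Z \<and> det Z \<le> (\<Prod>i\<in>UNIV. Z $ i $ i)"
    using insert.IH Z(1,2) by simp
  have "(\<Prod>i\<in>UNIV. Z $ i $ i) \<le> (\<Prod>i\<in>UNIV. X $ i $ i)"
    using pos_def_diag_pos[OF Z(2)] Z(4) by (simp add: less_imp_le prod_mono)
  then show ?case
    using IH Z(3) by simp
qed

theorem hadamard_inequality:
  fixes X :: "real^'n^'n"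
  assumes "transpose X = X" and "pos_def X"
  shows "0 < det X \<and> det X \<le> (\<Prod>i\<in>UNIV. X $ i $ i)"
  using hadamard_inequality_offdiag_rows[OF assms subset_UNIV] .

section \<open>Gram matrices plus a positive diagonal\<close>

definition diag_matrix :: "('n \<Rightarrow> real) \<Rightarrow> real^'n^'n" where
  "diag_matrix v = (\<chi> i j. if i = j then v i else 0)"

lemma det_diag_matrix: "det (diag_matrix v) = (\<Prod>i\<in>UNIV. v i)"
  by (subst det_diagonal) (auto simp: diag_matrix_def)

lemma diag_matrix_mult_vector: "diag_matrix v *v x = (\<chi> i. v i * x $ i)"
  by (simp add: diag_matrix_def matrix_vector_mult_def vec_eq_iff
      if_distrib[of "\<lambda>y. y * z" for z] cong: if_cong)

lemma pos_def_gram_plus_diag: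
  fixes Y :: "real^'n^'m"
  assumes v: "\<And>i. 0 < v i"
  shows "pos_def (transpose Y ** Y + diag_matrix v)"
  unfolding pos_def_def
proof (intro allI impI)
  fix x :: "real^'n"
  assume "x \<noteq> 0"
  then obtain i where "x $ i \<noteq> 0"
    by (auto simp: vec_eq_iff)
  then have "0 < (\<Sum>j\<in>UNIV. v j * (x $ j)\<^sup>2)"
    by (intro sum_pos2[of UNIV i]) (simp_all add: v less_imp_le[OF v])
  moreover have "x \<bullet> ((transpose Y ** Y + diag_matrix v) *v x)
                  = x \<bullet> ((transpose Y ** Y) *v x) + x \<bullet> (diag_matrix v *v x)"
    by (simp add: matrix_vector_mult_add_rdistrib inner_add_right)
  moreover have "x \<bullet> ((transpose Y ** Y) *v x) = (Y *v x) \<bullet> (Y *v x)"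
    using inner_congruence[of x Y "mat 1"] by simp
  moreover have "x \<bullet> (diag_matrix v *v x) = (\<Sum>j\<in>UNIV. v j * (x $ j)\<^sup>2)"
    by (simp add: diag_matrix_mult_vector inner_vec_def power2_eq_square mult_ac)
  ultimately show "0 < x \<bullet> ((transpose Y ** Y + diag_matrix v) *v x)"
    by (simp add: add_nonneg_pos)
qed

lemma ln_det_gram_plus_diag_le:
  fixes Y :: "real^'n^'m"
  assumes v: "\<And>i. 0 < v i"
  shows "ln (det (transpose Y ** Y + diag_matrix v) / (\<Prod>i\<in>UNIV. v i))
           \<le> (\<Sum>i\<in>UNIV. ln (1 + (norm (column i Y))\<^sup>2 / v i))"
proof -
  let ?G = "transpose Y ** Y + diag_matrix v"
  have G_entry: "?G $ i $ j = column i Y \<bullet> column j Y + (if i = j then v i else 0)" for i j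
    by (simp add: diag_matrix_def matrix_mult_transpose_dot_column)
  have "transpose ?G = ?G"
    unfolding vec_eq_iff transpose_def[of ?G] vec_lambda_beta G_entry by (simp add: inner_commute)
  moreover have "pos_def ?G"
    using v by (rule pos_def_gram_plus_diag)
  ultimately have G: "0 < det ?G" "det ?G \<le> (\<Prod>i\<in>UNIV. ?G $ i $ i)"
    using hadamard_inequality by blast+
  have "?G $ i $ i = v i * (1 + (norm (column i Y))\<^sup>2 / v i)" for i
    using v[of i] unfolding G_entry by (simp add: power2_norm_eq_inner field_simps)
  then have "det ?G / (\<Prod>i\<in>UNIV. v i) \<le> (\<Prod>i\<in>UNIV. 1 + (norm (column i Y))\<^sup>2 / v i)"
    using G(2) v by (simp add: prod.distrib prod_pos divide_le_eq mult.commute)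
  moreover have "0 < 1 + (norm (column i Y))\<^sup>2 / v i" for i
    using v[of i] by (simp add: add_pos_nonneg)
  ultimately show ?thesis
    using G(1) v by (simp add: ln_prod[symmetric] prod_pos less_imp_neq[symmetric])
qed

section \<open>Concavity of the logarithm\<close>

lemma sum_ln_le_card_mult_ln_mean:
  fixes x :: "'a \<Rightarrow> real"
  assumes "finite A" and "A \<noteq> {}" and "\<And>i. i \<in> A \<Longrightarrow> 0 < x i"
  shows "(\<Sum>i\<in>A. ln (x i)) \<le> card A * ln ((\<Sum>i\<in>A. x i) / card A)"
proof -
  have card_pos: "0 < real (card A)"
    using assms(1,2) by (simp add: card_gt_0_iff)
  have "(\<Sum>i\<in>A. (1 / card A) * ln (x i)) \<le> ln (\<Sum>i\<in>A. (1 / card A) *\<^sub>R x i)"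
    using assms card_pos by (intro concave_on_sum[OF assms(1,2) ln_concave]) auto
  then have "(\<Sum>i\<in>A. ln (x i)) / card A \<le> ln ((\<Sum>i\<in>A. x i) / card A)"
    by (simp add: sum_divide_distrib sum_distrib_left[symmetric])
  then show ?thesis
    using card_pos by (simp add: divide_le_eq mult.commute)
qed

lemma sum_ln_one_plus_div_le:
  fixes g :: "'a \<Rightarrow> real" and K c :: real
  assumes "finite A" and "A \<noteq> {}" and g: "\<And>i. i \<in> A \<Longrightarrow> 0 \<le> g i"
    and "sum g A \<le> K" and "0 < c"
  shows "(\<Sum>i\<in>A. ln (1 + g i / c)) \<le> card A * ln (1 + K / (card A * c))"
proof -
  have card_pos: "0 < real (card A)"
    using assms(1,2) by (simp add: card_gt_0_iff)
  have "(\<Sum>i\<in>A. ln (1 + g i / c)) \<le> card A * ln ((\<Sum>i\<in>A. 1 + g i / c) / card A)"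
    using assms by (intro sum_ln_le_card_mult_ln_mean) (auto intro: add_pos_nonneg)
  also have "(\<Sum>i\<in>A. 1 + g i / c) / card A = 1 + sum g A / (card A * c)"
    using card_pos \<open>0 < c\<close> by (simp add: sum.distrib sum_divide_distrib[symmetric] field_simps)
  also have "card A * ln (1 + sum g A / (card A * c)) \<le> card A * ln (1 + K / (card A * c))"
  proof -
    have "0 \<le> sum g A / (card A * c)"
      using g card_pos \<open>0 < c\<close> by (simp add: sum_nonneg)
    moreover have "sum g A / (card A * c) \<le> K / (card A * c)"
      using \<open>sum g A \<le> K\<close> card_pos \<open>0 < c\<close> by (simp add: divide_right_mono)
    ultimately show ?thesis
      using card_pos by (intro mult_left_mono ln_mono) auto
  qed
  finally show ?thesis .
qed

section \<open>Diagonalizing an orthogonal projection\<close>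

lemma orthonormal_basis_matrix:
  fixes B :: "(real^'n) set"
  assumes orth: "pairwise orthogonal B" and unit: "\<And>x. x \<in> B \<Longrightarrow> norm x = 1"
    and span: "span B = UNIV"
  obtains U :: "real^'n^'n" where "orthogonal_matrix U" "bij_betw (\<lambda>j. column j U) UNIV B"
proof -
  have "independent B"
    using pairwise_orthogonal_independent[OF orth] unit by force
  then have "card B = CARD('n)" and "finite B"
    using basis_card_eq_dim[OF subset_UNIV _ \<open>independent B\<close>] span independent_imp_finite
    by auto
  then obtain f where f: "bij_betw f (UNIV :: 'n set) B"
    using finite_same_card_bij[OF finite] by metis
  define U where "U = (\<chi> i j. f j $ i :: real^'n^'n)"
  have column_U: "column j U = f j" for j
    by (simp add: U_def column_def vec_eq_iff)
  have "norm (f i) = 1" for i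
    using bij_betwE[OF f] unit by blast
  moreover have "orthogonal (f i) (f j)" if "i \<noteq> j" for i j
    using that orth f by (auto simp: pairwise_def bij_betw_def inj_on_def)
  ultimately have "orthogonal_matrix U"
    by (simp add: orthogonal_matrix_orthonormal_columns column_U)
  moreover have "bij_betw (\<lambda>j. column j U) UNIV B"
    using f by (simp add: column_U)
  ultimately show thesis
    using that by blast
qed

lemma symmetric_idempotent_ranges_orthogonal:
  fixes P :: "real^'n^'n"
  assumes sym: "transpose P = P" and idem: "P ** P = P"
  shows "(P *v x) \<bullet> ((mat 1 - P) *v y) = 0"
proof -
  have "(P *v x) \<bullet> (P *v y) = x \<bullet> (P *v (P *v y))"
    by (metis dot_lmul_matrix sym transpose_matrix_vector)
  also have "\<dots> = (P *v x) \<bullet> y"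
    by (metis dot_lmul_matrix idem matrix_vector_mul_assoc sym transpose_matrix_vector)
  finally show ?thesis
    by (simp add: matrix_vector_mult_diff_rdistrib inner_diff_right)
qed

lemma symmetric_idempotent_eigenbasis:
  fixes P :: "real^'n^'n"
  assumes sym: "transpose P = P" and idem: "P ** P = P"
  obtains U :: "real^'n^'n" and I :: "'n set"
  where "orthogonal_matrix U" "card I = rank P"
    "\<And>j. j \<in> I \<Longrightarrow> P *v column j U = column j U"
    "\<And>j. j \<notin> I \<Longrightarrow> P *v column j U = 0"
proof -
  define S1 where "S1 = range (\<lambda>x. P *v x)"
  define S2 where "S2 = range (\<lambda>x. (mat 1 - P) *v x)"
  have "subspace S1" "subspace S2"
    unfolding S1_def S2_def by (auto intro: linear_subspace_image)
  then obtain B1 B2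
    where B1: "B1 \<subseteq> S1" "pairwise orthogonal B1" "\<And>x. x \<in> B1 \<Longrightarrow> norm x = 1"
      "card B1 = dim S1" "span B1 = S1"
    and B2: "B2 \<subseteq> S2" "pairwise orthogonal B2" "\<And>x. x \<in> B2 \<Longrightarrow> norm x = 1"
      "span B2 = S2"
    by (metis orthonormal_basis_subspace)
  have S1_S2: "u \<bullet> w = 0" if "u \<in> S1" "w \<in> S2" for u w
    using that symmetric_idempotent_ranges_orthogonal[OF sym idem] by (auto simp: S1_def S2_def)
  have P_S1: "P *v u = u" if "u \<in> S1" for u
    using that idem by (auto simp: S1_def matrix_vector_mul_assoc)
  have P_S2: "P *v w = 0" if "w \<in> S2" for w
    using that idem
    by (auto simp: S2_def matrix_vector_mult_diff_rdistrib matrix_vector_mult_diff_distrib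
        matrix_vector_mul_assoc)
  have "pairwise orthogonal (B1 \<union> B2)"
    using B1(1,2) B2(1,2) S1_S2 inner_commute
    unfolding pairwise_def orthogonal_def by (metis Un_iff subsetD)
  moreover have "span (B1 \<union> B2) = UNIV"
  proof -
    have "x \<in> span (B1 \<union> B2)" for x
    proof -
      have "P *v x \<in> span (B1 \<union> B2)" "(mat 1 - P) *v x \<in> span (B1 \<union> B2)"
        using B1(5) B2(4) span_mono[of B1 "B1 \<union> B2"] span_mono[of B2 "B1 \<union> B2"]
        by (auto simp: S1_def S2_def)
      then have "P *v x + (mat 1 - P) *v x \<in> span (B1 \<union> B2)"
        by (rule span_add)
      then show ?thesis
        by (simp add: matrix_vector_mult_diff_rdistrib)
    qed
    then show ?thesis
      by auto
  qed
  ultimately obtain U where U: "orthogonal_matrix U" "bij_betw (\<lambda>j. column j U) UNIV (B1 \<union> B2)"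
    using orthonormal_basis_matrix B1(3) B2(3) by (metis Un_iff)
  define I where "I = {j. column j U \<in> B1}"
  have "bij_betw (\<lambda>j. column j U) I B1"
    using U(2) unfolding I_def bij_betw_def inj_on_def by auto
  then have "card I = rank P"
    using B1(4) by (simp add: bij_betw_same_card rank_dim_range S1_def)
  moreover have "P *v column j U = column j U" if "j \<in> I" for j
    using that B1(1) P_S1 by (auto simp: I_def)
  moreover have "P *v column j U = 0" if "j \<notin> I" for j
    using that U(2) B2(1) P_S2 by (auto simp: I_def dest: bij_betwE)
  ultimately show thesis
    using that U(1) by blast
qed

lemma symmetric_idempotent_pencil_diagonalized:
  fixes P U :: "real^'n^'n"
  assumes U: "orthogonal_matrix U"
    and in_I: "\<And>j. j \<in> I \<Longrightarrow> P *v column j U = column j U"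
    and not_in_I: "\<And>j. j \<notin> I \<Longrightarrow> P *v column j U = 0"
  shows "transpose U ** (a *\<^sub>R (mat 1 - P) + b *\<^sub>R P) ** U
           = diag_matrix (\<lambda>j. if j \<in> I then b else a)"
proof -
  let ?M = "a *\<^sub>R (mat 1 - P) + b *\<^sub>R P" and ?w = "\<lambda>j. if j \<in> I then b else a"
  have eigen: "?M *v column j U = ?w j *\<^sub>R column j U" for j
    using in_I[of j] not_in_I[of j]
    by (auto simp: matrix_vector_mult_add_rdistrib matrix_vector_mult_diff_rdistrib
        scaleR_matrix_vector_assoc[symmetric])
  have "(?M ** U) $ i $ j = (U ** diag_matrix ?w) $ i $ j" for i j
  proof -
    have "(?M ** U) $ i $ j = (?M *v column j U) $ i"
      by (simp add: matrix_matrix_mult_def matrix_vector_mult_def column_def)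
    then show ?thesis
      unfolding eigen
      by (simp add: matrix_matrix_mult_def diag_matrix_def column_def mult.commute
          if_distrib[of "\<lambda>x. z * x" for z] cong: if_cong)
  qed
  then have "?M ** U = U ** diag_matrix ?w"
    by (simp add: vec_eq_iff)
  then have "transpose U ** ?M ** U = transpose U ** (U ** diag_matrix ?w)"
    by (simp only: matrix_mul_assoc[symmetric])
  then show ?thesis
    using U by (simp add: matrix_mul_assoc orthogonal_matrix)
qed

section \<open>The log-determinant bound\<close>

lemma matrix_add_rdistrib: "((A :: 'a::semiring_1^'n^'m) + B) ** C = A ** C + B ** C"
  by (vector matrix_matrix_mult_def sum.distrib[symmetric] field_simps)

lemma det_orthogonal_congruence:
  fixes U M :: "real^'n^'n"
  assumes "orthogonal_matrix U"
  shows "det (transpose U ** M ** U) = det M"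
  using det_orthogonal_matrix[OF assms] by (auto simp: det_mul)

lemma sum_norm_columns_mult_orthogonal:
  fixes D :: "real^'n^'m" and U :: "real^'n^'n"
  assumes "orthogonal_matrix U"
  shows "(\<Sum>j\<in>UNIV. (norm (column j (D ** U)))\<^sup>2) = (\<Sum>k\<in>UNIV. (norm (D $ k))\<^sup>2)"
proof -
  have row: "(D ** U) $ k \<bullet> (D ** U) $ k = D $ k \<bullet> D $ k" for k
  proof -
    have "(D ** U) $ k = D $ k v* U"
      by (simp add: vec_eq_iff matrix_matrix_mult_def vector_matrix_mult_def mult.commute)
    then have "(D ** U) $ k \<bullet> (D ** U) $ k = D $ k \<bullet> (U *v (transpose U *v D $ k))"
      by (simp add: dot_lmul_matrix)
    also have "U *v (transpose U *v D $ k) = D $ k"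
      using assms unfolding orthogonal_matrix_def
      by (simp only: matrix_vector_mul_assoc matrix_vector_mul_lid)
    finally show ?thesis .
  qed
  have "(\<Sum>j\<in>UNIV. column j (D ** U) \<bullet> column j (D ** U))
          = (\<Sum>j\<in>UNIV. \<Sum>k\<in>UNIV. (D ** U) $ k $ j * (D ** U) $ k $ j)"
    by (simp add: inner_vec_def column_def)
  also have "\<dots> = (\<Sum>k\<in>UNIV. (D ** U) $ k \<bullet> (D ** U) $ k)"
    by (subst sum.swap) (simp add: inner_vec_def)
  finally show ?thesis
    by (simp add: power2_norm_eq_inner row)
qed

lemma sum_norm_columns_mult_orthogonal_le:
  fixes D :: "real^'n^'m" and U :: "real^'n^'n"
  assumes "orthogonal_matrix U" and "\<And>k. norm (D $ k) \<le> 1"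
  shows "(\<Sum>j\<in>A. (norm (column j (D ** U)))\<^sup>2) \<le> CARD('m)"
proof -
  have "(\<Sum>j\<in>A. (norm (column j (D ** U)))\<^sup>2)
          \<le> (\<Sum>j\<in>UNIV. (norm (column j (D ** U)))\<^sup>2)"
    by (rule sum_mono2) simp_all
  also have "\<dots> \<le> (\<Sum>k\<in>(UNIV :: 'm set). 1)"
    unfolding sum_norm_columns_mult_orthogonal[OF assms(1)]
    by (intro sum_mono) (simp add: assms(2) power_le_one)
  finally show ?thesis
    by simp
qed

lemma ln_det_gram_plus_pencil_le:
  fixes P U :: "real^'n^'n" and D :: "real^'n^'m"
  assumes U: "orthogonal_matrix U"
    and eigen: "\<And>j. j \<in> I \<Longrightarrow> P *v column j U = column j U"
      "\<And>j. j \<notin> I \<Longrightarrow> P *v column j U = 0"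
    and "0 < a" and "0 < b"
  shows "ln (det (transpose D ** D + (a *\<^sub>R (mat 1 - P) + b *\<^sub>R P))
               / det (a *\<^sub>R (mat 1 - P) + b *\<^sub>R P))
         \<le> (\<Sum>j\<in>I. ln (1 + (norm (column j (D ** U)))\<^sup>2 / b))
           + (\<Sum>j\<in>UNIV - I. ln (1 + (norm (column j (D ** U)))\<^sup>2 / a))"
proof -
  let ?V = "a *\<^sub>R (mat 1 - P) + b *\<^sub>R P"
  define w where "w j = (if j \<in> I then b else a)" for j
  have w_pos: "0 < w j" for j
    using assms(4,5) by (simp add: w_def)
  have V_diag: "transpose U ** ?V ** U = diag_matrix w"
    unfolding w_def by (rule symmetric_idempotent_pencil_diagonalized[OF U eigen])
  have "transpose U ** (transpose D ** D + ?V) ** U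
          = transpose (D ** U) ** (D ** U) + diag_matrix w"
    by (simp add: matrix_add_ldistrib matrix_add_rdistrib V_diag[symmetric] matrix_transpose_mul
        matrix_mul_assoc)
  then have "det (transpose D ** D + ?V) = det (transpose (D ** U) ** (D ** U) + diag_matrix w)"
    using det_orthogonal_congruence[OF U, of "transpose D ** D + ?V"] by simp
  moreover have "det ?V = (\<Prod>j\<in>UNIV. w j)"
    using det_orthogonal_congruence[OF U, of ?V] V_diag by (simp add: det_diag_matrix)
  ultimately have "ln (det (transpose D ** D + ?V) / det ?V)
                     \<le> (\<Sum>j\<in>UNIV. ln (1 + (norm (column j (D ** U)))\<^sup>2 / w j))"
    using ln_det_gram_plus_diag_le[of w "D ** U"] w_pos by simp
  also have "\<dots> = (\<Sum>j\<in>I. ln (1 + (norm (column j (D ** U)))\<^sup>2 / b))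
                   + (\<Sum>j\<in>UNIV - I. ln (1 + (norm (column j (D ** U)))\<^sup>2 / a))"
    by (simp add: w_def sum.subset_diff[of I UNIV] add.commute)
  finally show ?thesis .
qed

theorem lemma2:
  fixes P :: "real^'d^'d" and D :: "real^'d^'k"
    and p :: nat and lambda1 lambda2 :: real
  assumes "CARD('d) \<ge> 2"
    and "transpose P = P" and "P ** P = P"
    and "rank P = p" and "1 \<le> p" and "p \<le> CARD('d) - 1"
    and "lambda1 > 0" and "lambda2 > 0"
    and "\<And>i. norm (D $ i) \<le> 1"
  shows "ln (det (transpose D ** D + lambda1 *\<^sub>R (mat 1 - P) + lambda2 *\<^sub>R P)
              / det (lambda1 *\<^sub>R (mat 1 - P) + lambda2 *\<^sub>R P))
         \<le> real p * ln (1 + real CARD('k) / (real p * lambda2))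
           + real (CARD('d) - p) * ln (1 + real CARD('k) / (real (CARD('d) - p) * lambda1))"
proof -
  obtain U :: "real^'d^'d" and I where U: "orthogonal_matrix U" and card_I: "card I = p"
    and eigen: "\<And>j. j \<in> I \<Longrightarrow> P *v column j U = column j U"
      "\<And>j. j \<notin> I \<Longrightarrow> P *v column j U = 0"
    using symmetric_idempotent_eigenbasis[OF assms(2,3)] assms(4) by blast
  define g where "g j = (norm (column j (D ** U)))\<^sup>2" for j
  have g_nonneg: "0 \<le> g j" and g_sum: "sum g A \<le> CARD('k)" for j A
    using sum_norm_columns_mult_orthogonal_le[OF U assms(9)] by (simp_all add: g_def)
  have card_compl: "card (UNIV - I) = CARD('d) - p"
    using card_I by (simp add: card_Diff_subset)
  then have "0 < card I" and "0 < card (UNIV - I)"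
    using card_I assms(5,6) by linarith+
  then have I_ne: "I \<noteq> {}" and compl_ne: "UNIV - I \<noteq> {}"
    by (simp_all add: card_gt_0_iff)
  have "(\<Sum>j\<in>I. ln (1 + g j / lambda2)) \<le> p * ln (1 + CARD('k) / (p * lambda2))"
    and "(\<Sum>j\<in>UNIV - I. ln (1 + g j / lambda1))
           \<le> (CARD('d) - p) * ln (1 + CARD('k) / ((CARD('d) - p) * lambda1))"
    using sum_ln_one_plus_div_le[OF finite I_ne g_nonneg g_sum assms(8)]
      sum_ln_one_plus_div_le[OF finite compl_ne g_nonneg g_sum assms(7)] card_I card_compl
    by simp_all
  moreover have "ln (det (transpose D ** D + lambda1 *\<^sub>R (mat 1 - P) + lambda2 *\<^sub>R P)
                       / det (lambda1 *\<^sub>R (mat 1 - P) + lambda2 *\<^sub>R P))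
                 \<le> (\<Sum>j\<in>I. ln (1 + g j / lambda2)) + (\<Sum>j\<in>UNIV - I. ln (1 + g j / lambda1))"
    using ln_det_gram_plus_pencil_le[OF U eigen assms(7,8), where D = D]
    by (simp add: g_def add.assoc)
  ultimately show ?thesis
    by linarith
qed

end
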